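(* Let $\mathbb G$ be the projective Fraïssé limit of the class $\mathcal G$ of finite connected graphs with confluent epimorphisms. Then the edge relation $E(\mathbb G)$ is transitive.
   Context: A graph is a pair $A=(V(A),E(A))$ with $E(A)\subseteq V(A)^2$ reflexive and symmetric. A topological graph is a graph whose vertex set is a compact, second countable, zero-dimensional (metrizable) space and whose edge set is closed in $V^2$. A homomorphism maps edges to edges; an epimorphism is a homomorphism surjective on vertices and on edges (continuous, when the domain is a topological graph). A subset $S\subseteq V(A)$ of a (topological) graph is disconnected if there are nonempty closed subsets $P,Q$ of $S$ with $P\cup Q=S$ and no edge $\langle a,b\rangle$ with $a\in P$, $b\in Q$; otherwise connected. Components are maximal connected subsets. An epimorphism $f\colon A\to B$ is confluent if for every connected $Q\subseteq V(B)$ and every component $C$ of $f^{-1}(Q)$, $f(C)=Q$. $\mathcal G$ is the class of finite connected graphs with confluent epimorphisms; it is a projective Fraïssé class. Its projective Fraïssé limit $\mathbb G$ is the unique (up to isomorphism) topological graph such that: (1) for each $A\in\mathcal G$ there is a confluent epimorphism $\mathbb G\to A$; (2) for $A,B\in\mathcal G$ and confluent epimorphisms $f\colon\mathbb G\to A$, $g\colon B\to A$ there is a confluent epimorphism $h\colon\mathbb G\to B$ with $f=g\circ h$; (3) for every $\varepsilon>0$ (with respect to a fixed compatible metric) there are $A\in\mathcal G$ and a confluent epimorphism $f\colon\mathbb G\to A$ all of whose point-preimages have diameter $<\varepsilon$. *)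

theory Defs
  imports "HOL-Analysis.Analysis"
begin

definition is_graph :: "'a set \<Rightarrow> ('a \<times> 'a) set \<Rightarrow> bool" where
  "is_graph V E \<longleftrightarrow> E \<subseteq> V \<times> V \<and> (\<forall>x\<in>V. (x, x) \<in> E) \<and> (\<forall>x y. (x, y) \<in> E \<longrightarrow> (y, x) \<in> E)"

text \<open>Graph-connectedness of a subset S (closed sets taken in the subspace topology of S).
  For finite graphs on nat the topology is discrete, so every subset is closed.\<close>
definition graph_connected :: "('a::topological_space \<times> 'a) set \<Rightarrow> 'a set \<Rightarrow> bool" where
  "graph_connected E S \<longleftrightarrow>
     \<not> (\<exists>P Q. P \<noteq> {} \<and> Q \<noteq> {} \<and> closedin (top_of_set S) P \<and> closedin (top_of_set S) Q
          \<and> P \<union> Q = S \<and> (\<forall>a\<in>P. \<forall>b\<in>Q. (a, b) \<notin> E))"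

definition graph_component :: "('a::topological_space \<times> 'a) set \<Rightarrow> 'a set \<Rightarrow> 'a set \<Rightarrow> bool" where
  "graph_component E X C \<longleftrightarrow> C \<subseteq> X \<and> graph_connected E C \<and>
     (\<forall>D. C \<subseteq> D \<and> D \<subseteq> X \<and> graph_connected E D \<longrightarrow> D = C)"

definition graph_epi ::
  "'a::topological_space set \<Rightarrow> ('a \<times> 'a) set \<Rightarrow> 'b::topological_space set \<Rightarrow> ('b \<times> 'b) set \<Rightarrow> ('a \<Rightarrow> 'b) \<Rightarrow> bool" where
  "graph_epi V E W F f \<longleftrightarrow> continuous_on V f \<and> f ` V = W \<and> (\<lambda>(a, b). (f a, f b)) ` E = F"

definition confluent_epi ::
  "'a::topological_space set \<Rightarrow> ('a \<times> 'a) set \<Rightarrow> 'b::topological_space set \<Rightarrow> ('b \<times> 'b) set \<Rightarrow> ('a \<Rightarrow> 'b) \<Rightarrow> bool" where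
  "confluent_epi V E W F f \<longleftrightarrow> graph_epi V E W F f \<and>
     (\<forall>Q. Q \<subseteq> W \<and> graph_connected F Q \<longrightarrow>
        (\<forall>C. graph_component E (V \<inter> f -` Q) C \<longrightarrow> f ` C = Q))"

text \<open>Objects of the class G: nonempty finite connected graphs (vertices taken in nat,
  which carries the discrete topology; every finite graph is isomorphic to one of these).\<close>
definition fin_conn_graph :: "nat set \<Rightarrow> (nat \<times> nat) set \<Rightarrow> bool" where
  "fin_conn_graph V E \<longleftrightarrow> is_graph V E \<and> finite V \<and> V \<noteq> {} \<and> graph_connected E V"

text \<open>Topological graph: compact, zero-dimensional vertex set in a metric space
  (second countability is automatic for compact metric spaces), closed edge set.\<close>
definition top_graph :: "'a::metric_space set \<Rightarrow> ('a \<times> 'a) set \<Rightarrow> bool" where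
  "top_graph V E \<longleftrightarrow> is_graph V E \<and> compact V \<and> closed E \<and>
     (\<forall>x\<in>V. \<forall>e>0. \<exists>U. openin (top_of_set V) U \<and> closedin (top_of_set V) U \<and> x \<in> U \<and> U \<subseteq> ball x e)"

text \<open>Characterization (1)-(3) of the projective Fraisse limit of G.\<close>
definition is_G_limit :: "'a::metric_space set \<Rightarrow> ('a \<times> 'a) set \<Rightarrow> bool" where
  "is_G_limit V E \<longleftrightarrow> top_graph V E \<and>
     (\<forall>A EA. fin_conn_graph A EA \<longrightarrow> (\<exists>f. confluent_epi V E A EA f)) \<and>
     (\<forall>A EA B EB f g. fin_conn_graph A EA \<and> fin_conn_graph B EB \<and>
        confluent_epi V E A EA f \<and> confluent_epi B EB A EA g \<longrightarrow>
        (\<exists>h. confluent_epi V E B EB h \<and> (\<forall>x\<in>V. f x = g (h x)))) \<and>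
     (\<forall>e>0. \<exists>A EA f. fin_conn_graph A EA \<and> confluent_epi V E A EA f \<and>
        (\<forall>y\<in>A. diameter (V \<inter> f -` {y}) < e))"

end

theory Submission
  imports Defs
begin

text \<open>
  Let \<open>a E b\<close> and \<open>b E c\<close> in the limit. For a finite connected graph \<open>A\<close>, let \<open>B\<close> be its
  arc graph: the vertices are the oriented edges of \<open>A\<close>, two of them adjacent if they share
  their tail or are reverses of each other. The tail map \<open>B \<rightarrow> A\<close> is confluent, and it sends
  the ends of every walk of length two in \<open>B\<close> to adjacent vertices of \<open>A\<close>. Factoring a
  confluent \<open>f\<close> from the limit onto \<open>A\<close> through the tail map shows that \<open>f a\<close> and \<open>f c\<close>
  are adjacent, so some edge of the limit joins the fibres over \<open>f a\<close> and \<open>f c\<close>. Since there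
  are such \<open>f\<close> with fibres of arbitrarily small diameter and \<open>E\<close> is closed, \<open>a E c\<close>.
\<close>

lemma closedin_discrete:
  fixes S T :: "'a::discrete_topology set"
  assumes "T \<subseteq> S"
  shows "closedin (top_of_set S) T"
  using assms by (simp add: closed_def open_discrete closed_subset)

lemma graph_component_of_connected:
  assumes "graph_connected E X" and "graph_component E X C"
  shows "C = X"
  using assms unfolding graph_component_def by blast

lemma graph_connected_preimage:
  fixes g :: "'a::topological_space \<Rightarrow> 'b::discrete_topology"
  assumes Q: "graph_connected F Q"
    and onto: "g ` P = Q"
    and fibres_complete: "\<And>x y. x \<in> P \<Longrightarrow> y \<in> P \<Longrightarrow> g x = g y \<Longrightarrow> (x, y) \<in> E"
    and edges_lift: "\<And>u w. u \<in> Q \<Longrightarrow> w \<in> Q \<Longrightarrow> (u, w) \<in> F \<Longrightarrow>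
                       \<exists>x\<in>P. \<exists>y\<in>P. g x = u \<and> g y = w \<and> (x, y) \<in> E"
  shows "graph_connected E P"
  unfolding graph_connected_def
proof
  assume "\<exists>P1 P2. P1 \<noteq> {} \<and> P2 \<noteq> {} \<and> closedin (top_of_set P) P1 \<and> closedin (top_of_set P) P2
            \<and> P1 \<union> P2 = P \<and> (\<forall>a\<in>P1. \<forall>b\<in>P2. (a, b) \<notin> E)"
  then obtain P1 P2 where ne: "P1 \<noteq> {}" "P2 \<noteq> {}" and un: "P1 \<union> P2 = P"
    and sep: "\<And>a b. a \<in> P1 \<Longrightarrow> b \<in> P2 \<Longrightarrow> (a, b) \<notin> E"
    by blast
  have in_P1: "x' \<in> P1" if "x \<in> P1" "x' \<in> P" "g x' = g x" for x x'
  proof (rule ccontr)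
    assume "x' \<notin> P1"
    then have "x' \<in> P2" using un that(2) by blast
    moreover have "(x, x') \<in> E"
      using fibres_complete[of x x'] that un by auto
    ultimately show False using sep that(1) by blast
  qed
  have in_P2: "y' \<in> P2" if "y \<in> P2" "y' \<in> P" "g y' = g y" for y y'
  proof (rule ccontr)
    assume "y' \<notin> P2"
    then have "y' \<in> P1" using un that(2) by blast
    moreover have "(y', y) \<in> E"
      using fibres_complete[of y' y] that un by auto
    ultimately show False using sep that(1) by blast
  qed
  have no_edge: "(u, w) \<notin> F" if u: "u \<in> g ` P1" and w: "w \<in> g ` P2" for u w
  proof
    assume "(u, w) \<in> F"
    obtain x0 y0 where "x0 \<in> P1" "g x0 = u" "y0 \<in> P2" "g y0 = w" using u w by blast
    then have "u \<in> Q" "w \<in> Q" using un onto by auto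
    with \<open>(u, w) \<in> F\<close> obtain x y where "x \<in> P" "y \<in> P" "g x = u" "g y = w" "(x, y) \<in> E"
      using edges_lift by blast
    moreover have "x \<in> P1" using in_P1 \<open>x0 \<in> P1\<close> \<open>x \<in> P\<close> \<open>g x = u\<close> \<open>g x0 = u\<close> by simp
    moreover have "y \<in> P2" using in_P2 \<open>y0 \<in> P2\<close> \<open>y \<in> P\<close> \<open>g y = w\<close> \<open>g y0 = w\<close> by simp
    ultimately show False using sep by blast
  qed
  have cover: "g ` P1 \<noteq> {}" "g ` P2 \<noteq> {}" "g ` P1 \<union> g ` P2 = Q"
    using ne un onto by auto
  then have "closedin (top_of_set Q) (g ` P1)" "closedin (top_of_set Q) (g ` P2)"
    by (auto intro: closedin_discrete)
  with cover no_edge have "\<exists>P' Q'. P' \<noteq> {} \<and> Q' \<noteq> {} \<and>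
      closedin (top_of_set Q) P' \<and> closedin (top_of_set Q) Q' \<and>
      P' \<union> Q' = Q \<and> (\<forall>u\<in>P'. \<forall>w\<in>Q'. (u, w) \<notin> F)"
    by (intro exI[of _ "g ` P1"] exI[of _ "g ` P2"]) simp
  with Q show False unfolding graph_connected_def by contradiction
qed

lemma confluent_epi_if_connected_preimages:
  assumes "graph_epi V E W F f"
    and "\<And>Q. Q \<subseteq> W \<Longrightarrow> graph_connected F Q \<Longrightarrow> graph_connected E (V \<inter> f -` Q)"
  shows "confluent_epi V E W F f"
proof -
  have "f ` (V \<inter> f -` Q) = Q" if "Q \<subseteq> W" for Q
    using assms(1) that unfolding graph_epi_def by blast
  then show ?thesis
    using assms graph_component_of_connected unfolding confluent_epi_def by metis
qed

text \<open>The arc \<open>(u, w)\<close> of \<open>A\<close> is coded as the natural number \<open>prod_encode (u, w)\<close>,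
  since the finite graphs of the class have vertices in \<open>nat\<close>.\<close>

definition arc_vertices :: "(nat \<times> nat) set \<Rightarrow> nat set" where
  "arc_vertices EA = prod_encode ` EA"

definition arc_edges :: "(nat \<times> nat) set \<Rightarrow> (nat \<times> nat) set" where
  "arc_edges EA = {(prod_encode p, prod_encode q) | p q.
     p \<in> EA \<and> q \<in> EA \<and> (fst p = fst q \<or> q = prod.swap p)}"

definition arc_tail :: "nat \<Rightarrow> nat" where
  "arc_tail n = fst (prod_decode n)"

lemma arc_tail_encode [simp]: "arc_tail (prod_encode p) = fst p"
  by (simp add: arc_tail_def)

lemma encode_in_arc_edges_iff [simp]:
  "(prod_encode p, prod_encode q) \<in> arc_edges EA \<longleftrightarrow>
     p \<in> EA \<and> q \<in> EA \<and> (fst p = fst q \<or> q = prod.swap p)"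
proof
  assume "(prod_encode p, prod_encode q) \<in> arc_edges EA"
  then show "p \<in> EA \<and> q \<in> EA \<and> (fst p = fst q \<or> q = prod.swap p)"
    unfolding arc_edges_def by auto
qed (unfold arc_edges_def, blast)

lemma arc_edgesE:
  assumes "(x, y) \<in> arc_edges EA"
  obtains p q where "x = prod_encode p" "y = prod_encode q" "p \<in> EA" "q \<in> EA"
    "fst p = fst q \<or> q = prod.swap p"
  using assms unfolding arc_edges_def by auto

lemma arc_tail_image:
  assumes "is_graph A EA" and "Q \<subseteq> A"
  shows "arc_tail ` (arc_vertices EA \<inter> arc_tail -` Q) = Q"
proof
  show "Q \<subseteq> arc_tail ` (arc_vertices EA \<inter> arc_tail -` Q)"
  proof
    fix u assume "u \<in> Q"
    then have "prod_encode (u, u) \<in> arc_vertices EA \<inter> arc_tail -` Q"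
      using assms unfolding is_graph_def arc_vertices_def by auto
    then show "u \<in> arc_tail ` (arc_vertices EA \<inter> arc_tail -` Q)"
      by (metis arc_tail_encode fst_conv image_eqI)
  qed
qed auto

lemma arc_tail_walk2:
  assumes "is_graph A EA" and "(x, y) \<in> arc_edges EA" and "(y, z) \<in> arc_edges EA"
  shows "(arc_tail x, arc_tail z) \<in> EA"
proof -
  obtain p q where pq: "x = prod_encode p" "y = prod_encode q" "p \<in> EA" "q \<in> EA"
    "fst p = fst q \<or> q = prod.swap p"
    using assms(2) by (rule arc_edgesE)
  obtain q' r where qr: "y = prod_encode q'" "z = prod_encode r" "q' \<in> EA" "r \<in> EA"
    "fst q' = fst r \<or> r = prod.swap q'"
    using assms(3) by (rule arc_edgesE)
  have "q' = q" using pq(2) qr(1) by (metis prod_encode_inverse)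
  have loop: "(u, u) \<in> EA" if "(u, w) \<in> EA" for u w
    using assms(1) that unfolding is_graph_def by blast
  show ?thesis
    using pq qr \<open>q' = q\<close> loop[of "fst p" "snd p"]
    by (cases p; cases q; cases r) auto
qed

lemma arc_graph_connected_preimage:
  assumes "is_graph A EA" and "Q \<subseteq> A" and "graph_connected EA Q"
  shows "graph_connected (arc_edges EA) (arc_vertices EA \<inter> arc_tail -` Q)"
proof (rule graph_connected_preimage[OF assms(3) arc_tail_image[OF assms(1,2)]])
  show "(x, y) \<in> arc_edges EA"
    if "x \<in> arc_vertices EA \<inter> arc_tail -` Q" "y \<in> arc_vertices EA \<inter> arc_tail -` Q"
       "arc_tail x = arc_tail y" for x y
    using that unfolding arc_vertices_def by auto
  show "\<exists>x\<in>arc_vertices EA \<inter> arc_tail -` Q. \<exists>y\<in>arc_vertices EA \<inter> arc_tail -` Q.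
          arc_tail x = u \<and> arc_tail y = w \<and> (x, y) \<in> arc_edges EA"
    if "u \<in> Q" "w \<in> Q" "(u, w) \<in> EA" for u w
  proof -
    have "(w, u) \<in> EA" using assms(1) that(3) unfolding is_graph_def by blast
    then have "(prod_encode (u, w), prod_encode (w, u)) \<in> arc_edges EA"
      using that(3) by simp
    then show ?thesis
      using that \<open>(w, u) \<in> EA\<close> unfolding arc_vertices_def by force
  qed
qed

lemma arc_graph_fin_conn_graph:
  assumes "fin_conn_graph A EA"
  shows "fin_conn_graph (arc_vertices EA) (arc_edges EA)"
proof -
  have G: "is_graph A EA" and "finite A" "A \<noteq> {}" "graph_connected EA A"
    using assms unfolding fin_conn_graph_def by auto
  have "EA \<subseteq> A \<times> A" using G unfolding is_graph_def by blast
  then have whole: "arc_vertices EA \<inter> arc_tail -` A = arc_vertices EA"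
    by (auto simp: arc_vertices_def)
  have "is_graph (arc_vertices EA) (arc_edges EA)"
    unfolding is_graph_def
    by (auto simp: arc_vertices_def elim!: arc_edgesE)
  moreover have "finite (arc_vertices EA)"
    using \<open>EA \<subseteq> A \<times> A\<close> \<open>finite A\<close> unfolding arc_vertices_def
    by (meson finite_SigmaI finite_imageI finite_subset)
  moreover have "arc_vertices EA \<noteq> {}"
    using arc_tail_image[OF G order.refl] \<open>A \<noteq> {}\<close> by auto
  moreover have "graph_connected (arc_edges EA) (arc_vertices EA)"
    using arc_graph_connected_preimage[OF G order.refl \<open>graph_connected EA A\<close>] whole by simp
  ultimately show ?thesis unfolding fin_conn_graph_def by blast
qed

lemma arc_tail_confluent:
  assumes "fin_conn_graph A EA"
  shows "confluent_epi (arc_vertices EA) (arc_edges EA) A EA arc_tail"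
proof (rule confluent_epi_if_connected_preimages)
  have G: "is_graph A EA" using assms unfolding fin_conn_graph_def by blast
  then have "EA \<subseteq> A \<times> A" unfolding is_graph_def by blast
  then have whole: "arc_vertices EA \<inter> arc_tail -` A = arc_vertices EA"
    by (auto simp: arc_vertices_def)
  have "(\<lambda>(a, b). (arc_tail a, arc_tail b)) ` arc_edges EA = EA"
  proof
    show "(\<lambda>(a, b). (arc_tail a, arc_tail b)) ` arc_edges EA \<subseteq> EA"
      using arc_tail_walk2[OF G] G unfolding is_graph_def
      by (auto simp: arc_vertices_def elim!: arc_edgesE)
    show "EA \<subseteq> (\<lambda>(a, b). (arc_tail a, arc_tail b)) ` arc_edges EA"
    proof
      fix e assume "e \<in> EA"
      then have "(prod_encode e, prod_encode (prod.swap e)) \<in> arc_edges EA"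
        using G unfolding is_graph_def by (cases e) auto
      then show "e \<in> (\<lambda>(a, b). (arc_tail a, arc_tail b)) ` arc_edges EA"
        by (rule rev_image_eqI) (cases e, simp)
    qed
  qed
  then show "graph_epi (arc_vertices EA) (arc_edges EA) A EA arc_tail"
    unfolding graph_epi_def using arc_tail_image[OF G order.refl] whole
    by (simp add: continuous_on_discrete)
  show "graph_connected (arc_edges EA) (arc_vertices EA \<inter> arc_tail -` Q)"
    if "Q \<subseteq> A" "graph_connected EA Q" for Q
    using arc_graph_connected_preimage[OF G that] .
qed

lemma G_limit_walk2_image_edge:
  assumes limit: "is_G_limit V E"
    and A: "fin_conn_graph A EA" and f: "confluent_epi V E A EA f"
    and "(a, b) \<in> E" "(b, c) \<in> E"
  shows "(f a, f c) \<in> EA"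
proof -
  obtain h where h: "confluent_epi V E (arc_vertices EA) (arc_edges EA) h"
    and f_eq: "\<forall>x\<in>V. f x = arc_tail (h x)"
    using limit arc_graph_fin_conn_graph[OF A] arc_tail_confluent[OF A] A f
    unfolding is_G_limit_def by blast
  have "(\<lambda>(x, y). (h x, h y)) ` E = arc_edges EA"
    using h unfolding confluent_epi_def graph_epi_def by blast
  then have "(h a, h b) \<in> arc_edges EA" "(h b, h c) \<in> arc_edges EA"
    using assms(4,5) by force+
  moreover have "is_graph A EA" using A unfolding fin_conn_graph_def by blast
  ultimately have "(arc_tail (h a), arc_tail (h c)) \<in> EA" by (rule arc_tail_walk2[rotated])
  moreover have "a \<in> V" "c \<in> V"
    using limit assms(4,5) unfolding is_G_limit_def top_graph_def is_graph_def by blast+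
  ultimately show ?thesis using f_eq by simp
qed

lemma closed_pair_approachable:
  fixes S :: "('a::metric_space \<times> 'b::metric_space) set"
  assumes "closed S" and "\<And>e. e > 0 \<Longrightarrow> \<exists>(x', y')\<in>S. dist x x' < e \<and> dist y y' < e"
  shows "(x, y) \<in> S"
proof -
  have "\<exists>z\<in>S. dist z (x, y) < e" if "e > 0" for e
  proof -
    obtain x' y' where "(x', y') \<in> S" "dist x x' < e / 2" "dist y y' < e / 2"
      using assms(2)[of "e / 2"] \<open>e > 0\<close> by auto
    then show ?thesis
      by (intro bexI[of _ "(x', y')"])
        (auto simp: dist_Pair_Pair dist_commute sqrt_sum_squares_half_less)
  qed
  then show ?thesis using closed_approachable[OF assms(1)] by blast
qed

lemma dist_less_fibre_diameter:
  fixes V :: "'a::metric_space set"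
  assumes "bounded V" and "diameter (V \<inter> f -` {f x}) < e"
    and "x \<in> V" "x' \<in> V" "f x' = f x"
  shows "dist x x' < e"
proof -
  have "dist x x' \<le> diameter (V \<inter> f -` {f x})"
    using assms by (intro diameter_bounded_bound) (auto intro: bounded_subset)
  then show ?thesis using assms(2) by linarith
qed

theorem mainTheorem2:
  fixes V :: "'a::metric_space set" and E :: "('a \<times> 'a) set"
  assumes "is_G_limit V E"
  shows "trans E"
proof (rule transI)
  fix a b c assume ab: "(a, b) \<in> E" and bc: "(b, c) \<in> E"
  have "is_graph V E" "compact V" "closed E"
    using assms unfolding is_G_limit_def top_graph_def by auto
  then have "a \<in> V" "c \<in> V" "bounded V" and E_sub: "E \<subseteq> V \<times> V"
    using ab bc compact_imp_bounded unfolding is_graph_def by auto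
  show "(a, c) \<in> E"
  proof (rule closed_pair_approachable[OF \<open>closed E\<close>])
    fix e :: real assume "e > 0"
    then obtain A EA f where A: "fin_conn_graph A EA" and f: "confluent_epi V E A EA f"
      and small: "\<forall>y\<in>A. diameter (V \<inter> f -` {y}) < e"
      using assms unfolding is_G_limit_def by blast
    have epi: "f ` V = A" "(\<lambda>(x, y). (f x, f y)) ` E = EA"
      using f unfolding confluent_epi_def graph_epi_def by auto
    have "(f a, f c) \<in> EA" using G_limit_walk2_image_edge[OF assms A f ab bc] .
    then obtain a' c' where "(a', c') \<in> E" "f a' = f a" "f c' = f c"
      using epi(2) by force
    moreover have "dist a a' < e" "dist c c' < e"
      using dist_less_fibre_diameter[OF \<open>bounded V\<close>] small epi(1) E_sub calculation
        \<open>a \<in> V\<close> \<open>c \<in> V\<close>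
      by blast+
    ultimately show "\<exists>(a', c')\<in>E. dist a a' < e \<and> dist c c' < e" by blast
  qed
qed

end
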